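(* Let $n\ge 6$. All vertices $[\tau]$ of $\widetilde P_0(S_n)$ with $\tau$ a transposition lie in the same connected component $\widetilde\Delta_n$ of $\widetilde P_0(S_n)$, and $\widetilde\Delta_n$ contains vertices of each of the types $[1^{n-2},2]$, $[1^{n-5},2,3]$ and $[1^{n-3},3]$.
   Context: $\widetilde P_0(S_n)$: vertex set $\{[x]:x\in S_n\setminus\{\mathrm{id}\}\}$ with $[x]=\{y:\langle y\rangle=\langle x\rangle\}$, distinct $[x],[y]$ adjacent iff some representatives are one a positive power of the other. The type of $[\psi]$ is the partition of $n$ given by the orbit lengths of $\langle\psi\rangle$ on $\{1,\dots,n\}$, written with exponents denoting multiplicities. *)

theory Defs
  imports "HOL-Combinatorics.Combinatorics" "HOL-Library.Multiset"
begin

definition Sym :: "nat \<Rightarrow> (nat \<Rightarrow> nat) set" where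
  "Sym n = {p. p permutes {1..n}}"

text \<open>Cyclic subgroup generated by p (p has finite order, so nonnegative powers suffice).\<close>
definition cyc :: "(nat \<Rightarrow> nat) \<Rightarrow> (nat \<Rightarrow> nat) set" where
  "cyc p = range (\<lambda>k. p ^^ k)"

definition cls :: "nat \<Rightarrow> (nat \<Rightarrow> nat) \<Rightarrow> (nat \<Rightarrow> nat) set" where
  "cls n x = {y \<in> Sym n. cyc y = cyc x}"

definition verts :: "nat \<Rightarrow> (nat \<Rightarrow> nat) set set" where
  "verts n = {cls n x | x. x \<in> Sym n \<and> x \<noteq> id}"

definition adj :: "nat \<Rightarrow> (nat \<Rightarrow> nat) set \<Rightarrow> (nat \<Rightarrow> nat) set \<Rightarrow> bool" where
  "adj n A B \<longleftrightarrow> A \<in> verts n \<and> B \<in> verts n \<and> A \<noteq> B \<and>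
     (\<exists>x\<in>A. \<exists>y\<in>B. \<exists>k::nat. k > 0 \<and> (x = y ^^ k \<or> y = x ^^ k))"

definition component :: "nat \<Rightarrow> (nat \<Rightarrow> nat) set \<Rightarrow> (nat \<Rightarrow> nat) set set" where
  "component n V = {W. (adj n)\<^sup>*\<^sup>* V W}"

definition orbits_on :: "nat \<Rightarrow> (nat \<Rightarrow> nat) \<Rightarrow> nat set set" where
  "orbits_on n \<psi> = {{(\<psi> ^^ k) i | k. True} | i. i \<in> {1..n}}"

definition ptype :: "nat \<Rightarrow> (nat \<Rightarrow> nat) \<Rightarrow> nat multiset" where
  "ptype n \<psi> = image_mset card (mset_set (orbits_on n \<psi>))"

definition has_type :: "nat \<Rightarrow> (nat \<Rightarrow> nat) set \<Rightarrow> nat multiset \<Rightarrow> bool" where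
  "has_type n V T \<longleftrightarrow> (\<exists>\<psi>\<in>Sym n. V = cls n \<psi> \<and> ptype n \<psi> = T)"

definition is_transposition :: "nat \<Rightarrow> (nat \<Rightarrow> nat) \<Rightarrow> bool" where
  "is_transposition n \<tau> \<longleftrightarrow> (\<exists>a\<in>{1..n}. \<exists>b\<in>{1..n}. a \<noteq> b \<and> \<tau> = transpose a b)"

end

theory Submission
  imports Defs
begin

text \<open>
  For distinct points \<open>a, b, d, e, f\<close> the permutation \<open>x = (a b)(d e f)\<close> satisfies
  \<open>x\<^sup>3 = (a b)\<close> and \<open>x\<^sup>4 = (d e f)\<close>, so \<open>[(a b)] \<midarrow> [x] \<midarrow> [(d e f)]\<close> is a path.
  Two transpositions \<open>(a b)\<close> and \<open>(a c)\<close> with a common point leave at least three further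
  points when \<open>n \<ge> 6\<close>; both are then joined to the same 3-cycle on these points. Any two
  transpositions are linked by a chain of transpositions sharing a point, and the path above
  contains vertices of the types \<open>[1\<^sup>n\<^sup>-\<^sup>2,2]\<close>, \<open>[1\<^sup>n\<^sup>-\<^sup>5,2,3]\<close> and \<open>[1\<^sup>n\<^sup>-\<^sup>3,3]\<close>.
\<close>

lemma funpow_comp_commute:
  assumes "f \<circ> g = g \<circ> f"
  shows "(f \<circ> g) ^^ k = f ^^ k \<circ> g ^^ k"
proof -
  have gf: "g (f y) = f (g y)" for y
    using fun_cong[OF assms, of y] by simp
  have gfk: "g ((f ^^ j) y) = (f ^^ j) (g y)" for j y
    by (induction j) (simp_all add: gf)
  show ?thesis
    by (induction k) (simp_all add: fun_eq_iff gfk)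
qed

lemma funpow_mod_period:
  assumes "f ^^ l = id"
  shows "f ^^ k = f ^^ (k mod l)"
proof -
  have "f ^^ k = f ^^ (l * (k div l) + k mod l)"
    by simp
  also have "\<dots> = (f ^^ l) ^^ (k div l) \<circ> f ^^ (k mod l)"
    by (simp only: funpow_add funpow_mult)
  finally show ?thesis by (simp add: assms)
qed

lemma funpow_fixed_point: "f p = p \<Longrightarrow> (f ^^ k) p = p"
  by (induction k) auto

lemma cycle_of_list_funpow_length:
  assumes "distinct cs"
  shows "cycle_of_list cs ^^ length cs = id"
proof
  fix x
  show "(cycle_of_list cs ^^ length cs) x = id x"
  proof (cases "x \<in> set cs")
    case True
    have "map (cycle_of_list cs ^^ length cs) cs = map id cs"
      using cyclic_rotation[OF assms, of "length cs"] by simp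
    with True show ?thesis by (simp only: map_eq_conv)
  next
    case False
    then show ?thesis by (simp add: id_outside_supp funpow_fixed_point)
  qed
qed

lemma transpose_comp_3cycle_funpow:
  assumes "distinct [a, b, d, e, f]"
  shows "(transpose a b \<circ> cycle_of_list [d, e, f]) ^^ 3 = transpose a b"
    and "(transpose a b \<circ> cycle_of_list [d, e, f]) ^^ 4 = cycle_of_list [d, e, f]"
proof -
  let ?t = "cycle_of_list [a, b]" and ?c = "cycle_of_list [d, e, f]"
  have comm: "?t \<circ> ?c = ?c \<circ> ?t"
    by (rule cycles_commute) (use assms in auto)
  have t2: "?t ^^ 2 = id" and c3: "?c ^^ 3 = id"
    using cycle_of_list_funpow_length[of "[a, b]"] cycle_of_list_funpow_length[of "[d, e, f]"] assms
    by (simp_all add: numeral_2_eq_2 numeral_3_eq_3)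
  have "(?t \<circ> ?c) ^^ k = ?t ^^ (k mod 2) \<circ> ?c ^^ (k mod 3)" for k
    by (simp only: funpow_comp_commute[OF comm] funpow_mod_period[OF t2, of k]
        funpow_mod_period[OF c3, of k])
  from this[of 3] this[of 4]
  show "(transpose a b \<circ> ?c) ^^ 3 = transpose a b" "(transpose a b \<circ> ?c) ^^ 4 = ?c"
    by simp_all
qed

lemma Sym_funpow: "x \<in> Sym n \<Longrightarrow> x ^^ k \<in> Sym n"
  by (simp add: Sym_def permutes_funpow)

lemma Sym_comp: "p \<in> Sym n \<Longrightarrow> q \<in> Sym n \<Longrightarrow> p \<circ> q \<in> Sym n"
  by (simp add: Sym_def permutes_compose)

lemma transpose_in_Sym: "a \<in> {1..n} \<Longrightarrow> b \<in> {1..n} \<Longrightarrow> transpose a b \<in> Sym n"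
  by (simp add: Sym_def permutes_swap_id)

lemma cycle_of_list_in_Sym: "set cs \<subseteq> {1..n} \<Longrightarrow> cycle_of_list cs \<in> Sym n"
  unfolding Sym_def using cycle_permutes permutes_subset by blast

lemma cls_neqI:
  assumes "x \<in> Sym n" "y p = p" "x p \<noteq> p"
  shows "cls n x \<noteq> cls n y"
proof
  assume "cls n x = cls n y"
  with assms(1) have "cyc x = cyc y" by (auto simp: cls_def)
  moreover have "x \<in> cyc x" unfolding cyc_def by (rule range_eqI[of _ _ 1]) simp
  ultimately obtain k where "x = y ^^ k" by (auto simp: cyc_def)
  with assms(2,3) show False by (metis funpow_fixed_point)
qed

lemma cls_in_verts: "x \<in> Sym n \<Longrightarrow> x p \<noteq> p \<Longrightarrow> cls n x \<in> verts n"
  unfolding verts_def by (rule CollectI, rule exI[of _ x]) auto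

lemma adj_cls_funpow:
  assumes x: "x \<in> Sym n" and "0 < k" and "x p \<noteq> p" "(x ^^ k) p = p" "(x ^^ k) q \<noteq> q"
  shows "adj n (cls n (x ^^ k)) (cls n x)"
proof -
  have "cls n (x ^^ k) \<in> verts n" "cls n x \<in> verts n"
    using assms Sym_funpow cls_in_verts by metis+
  moreover have "cls n (x ^^ k) \<noteq> cls n x"
    using cls_neqI[OF x, of "x ^^ k" p] assms by metis
  moreover have "x ^^ k \<in> cls n (x ^^ k)" "x \<in> cls n x"
    using x Sym_funpow by (auto simp: cls_def)
  ultimately show ?thesis
    unfolding adj_def using \<open>0 < k\<close> by (intro conjI bexI exI[of _ k]) auto
qed

lemma symp_adj: "symp (adj n)"
  unfolding adj_def symp_def
  by (intro allI impI, elim conjE bexE exE) (intro conjI bexI exI; (assumption | auto))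

lemma adj_transpose_comp_3cycle:
  assumes dist: "distinct [a, b, d, e, f]" and sub: "set [a, b, d, e, f] \<subseteq> {1..n}"
  shows "adj n (cls n (transpose a b)) (cls n (transpose a b \<circ> cycle_of_list [d, e, f]))"
    and "adj n (cls n (cycle_of_list [d, e, f])) (cls n (transpose a b \<circ> cycle_of_list [d, e, f]))"
proof -
  let ?x = "transpose a b \<circ> cycle_of_list [d, e, f]"
  have x: "?x \<in> Sym n"
    using sub by (intro Sym_comp transpose_in_Sym cycle_of_list_in_Sym) auto
  note pow = transpose_comp_3cycle_funpow[OF dist]
  have "?x a \<noteq> a" "?x d \<noteq> d" "transpose a b d = d" "transpose a b a \<noteq> a"
    "cycle_of_list [d, e, f] a = a" "cycle_of_list [d, e, f] d \<noteq> d"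
    using dist by (auto simp: transpose_def)
  then show "adj n (cls n (transpose a b)) (cls n ?x)"
    and "adj n (cls n (cycle_of_list [d, e, f])) (cls n ?x)"
    using adj_cls_funpow[OF x, of 3 d a] adj_cls_funpow[OF x, of 4 a d] unfolding pow by simp_all
qed

lemma fresh_point:
  assumes "length xs < n"
  shows "\<exists>d\<in>{1..n}. d \<notin> set xs"
proof (rule ccontr)
  assume "\<not> ?thesis"
  then have "n \<le> card (set xs)"
    using card_mono[of "set xs" "{1..n}"] by auto
  with assms card_length[of xs] show False by linarith
qed

lemma transpositions_sharing_point_connected:
  assumes "a \<noteq> b" "a \<noteq> c" "a \<in> {1..n}" "b \<in> {1..n}" "c \<in> {1..n}" "6 \<le> n"
  shows "(adj n)\<^sup>*\<^sup>* (cls n (transpose a b)) (cls n (transpose a c))"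
proof (cases "b = c")
  case False
  obtain d where d: "d \<in> {1..n}" "d \<notin> set [a, b, c]"
    using fresh_point[of "[a, b, c]" n] assms by auto
  obtain e where e: "e \<in> {1..n}" "e \<notin> set [a, b, c, d]"
    using fresh_point[of "[a, b, c, d]" n] assms by auto
  obtain f where f: "f \<in> {1..n}" "f \<notin> set [a, b, c, d, e]"
    using fresh_point[of "[a, b, c, d, e]" n] assms by auto
  have "(adj n)\<^sup>*\<^sup>* (cls n (transpose a b')) (cls n (cycle_of_list [d, e, f]))"
    if "distinct [a, b', d, e, f]" "set [a, b', d, e, f] \<subseteq> {1..n}" for b'
    using adj_transpose_comp_3cycle[OF that] symp_adj
    by (meson r_into_rtranclp rtranclp.rtrancl_into_rtrancl sympD)
  from this[of b] this[of c] show ?thesis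
    using assms False d e f by (auto intro: rtranclp_trans sympD[OF symp_rtranclp[OF symp_adj]])
qed simp

lemma transpositions_connected:
  assumes "a \<noteq> b" "c \<noteq> d" "a \<in> {1..n}" "b \<in> {1..n}" "c \<in> {1..n}" "d \<in> {1..n}" "6 \<le> n"
  shows "(adj n)\<^sup>*\<^sup>* (cls n (transpose a b)) (cls n (transpose c d))"
proof (cases "a = c")
  case True
  then show ?thesis using transpositions_sharing_point_connected assms by blast
next
  case False
  then have "(adj n)\<^sup>*\<^sup>* (cls n (transpose a b)) (cls n (transpose c a))"
    using transpositions_sharing_point_connected[of a b c n] assms by (simp add: transpose_commute)
  also have "(adj n)\<^sup>*\<^sup>* \<dots> (cls n (transpose c d))"
    using transpositions_sharing_point_connected[of c a d n] assms False by simp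
  finally show ?thesis .
qed

lemma orbits_on_Sym:
  assumes "\<psi> \<in> Sym n"
  shows "orbits_on n \<psi> = orbit \<psi> ` {1..n}"
proof -
  have "permutation \<psi>"
    using assms permutation_permutes unfolding Sym_def by blast
  then show ?thesis
    unfolding orbits_on_def orbit_altdef_permutation[OF \<open>permutation \<psi>\<close>] by blast
qed

lemma orbit_2cycle:
  assumes "f i = j" "f j = i"
  shows "orbit f i = {i, j}"
proof -
  have "x \<in> {i, j}" if "x \<in> orbit f i" for x
    using that by induction (use assms in auto)
  moreover have "j \<in> orbit f i" "i \<in> orbit f i"
    using assms by (metis orbit_eqI)+
  ultimately show ?thesis by blast
qed

lemma orbit_3cycle:
  assumes "f i = j" "f j = k" "f k = i"
  shows "orbit f i = {i, j, k}"
proof -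
  have "x \<in> {i, j, k}" if "x \<in> orbit f i" for x
    using that by induction (use assms in auto)
  moreover have "j \<in> orbit f i" "k \<in> orbit f i" "i \<in> orbit f i"
    using assms by (metis orbit_eqI)+
  ultimately show ?thesis by blast
qed

lemma ptype_eqI:
  assumes \<psi>: "\<psi> \<in> Sym n" and S: "S \<subseteq> {1..n}" and fixed: "\<And>i. i \<in> {1..n} - S \<Longrightarrow> \<psi> i = i"
    and P: "orbit \<psi> ` S = P" and nontrivial: "\<And>A. A \<in> P \<Longrightarrow> 2 \<le> card A"
  shows "ptype n \<psi> = image_mset card (mset_set P) + replicate_mset (n - card S) 1"
proof -
  let ?F = "{1..n} - S"
  have "orbits_on n \<psi> = orbit \<psi> ` S \<union> orbit \<psi> ` ?F"
    using orbits_on_Sym[OF \<psi>] S by (metis Diff_partition image_Un)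
  also have "orbit \<psi> ` ?F = (\<lambda>i. {i}) ` ?F"
    using fixed by (intro image_cong) (simp_all add: orbit_eq_singleton_iff)
  finally have orbits: "orbits_on n \<psi> = P \<union> (\<lambda>i. {i}) ` ?F"
    using P by simp
  have fin: "finite S" "finite P" "finite ?F"
    using S P finite_subset by auto
  have disj: "P \<inter> (\<lambda>i. {i}) ` ?F = {}"
    using nontrivial by fastforce
  have "image_mset card (mset_set ((\<lambda>i. {i}) ` ?F)) = image_mset (\<lambda>_. 1) (mset_set ?F)"
    by (subst image_mset_mset_set[symmetric]) (auto simp: inj_on_def multiset.map_comp comp_def)
  also have "\<dots> = replicate_mset (n - card S) 1"
    using S fin by (simp add: image_mset_const_eq card_Diff_subset)
  finally show ?thesis
    unfolding ptype_def orbits using fin disj by (simp add: mset_set_Union)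
qed

lemma ptype_transpose:
  assumes "a \<noteq> b" "a \<in> {1..n}" "b \<in> {1..n}"
  shows "ptype n (transpose a b) = replicate_mset (n - 2) 1 + {#2#}"
proof -
  have "orbit (transpose a b) ` {a, b} = {{a, b}}"
    using orbit_2cycle[of "transpose a b" a b] orbit_2cycle[of "transpose a b" b a]
    by (simp add: insert_commute)
  then have "ptype n (transpose a b)
      = image_mset card (mset_set {{a, b}}) + replicate_mset (n - card {a, b}) 1"
    using assms by (intro ptype_eqI transpose_in_Sym) auto
  then show ?thesis
    using assms by (simp add: add.commute eval_nat_numeral)
qed

lemma ptype_3cycle:
  assumes "distinct [d, e, f]" "set [d, e, f] \<subseteq> {1..n}"
  shows "ptype n (cycle_of_list [d, e, f]) = replicate_mset (n - 3) 1 + {#3#}"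
proof -
  let ?c = "cycle_of_list [d, e, f]"
  have "?c d = e" "?c e = f" "?c f = d"
    using assms(1) by auto
  then have "orbit ?c ` {d, e, f} = {{d, e, f}}"
    using orbit_3cycle[of ?c d e f] orbit_3cycle[of ?c e f d] orbit_3cycle[of ?c f d e]
    by (simp add: insert_commute)
  then have "ptype n ?c
      = image_mset card (mset_set {{d, e, f}}) + replicate_mset (n - card {d, e, f}) 1"
    using assms id_outside_supp[of _ "[d, e, f]"]
    by (intro ptype_eqI cycle_of_list_in_Sym) auto
  then show ?thesis
    using assms by (simp add: add.commute eval_nat_numeral)
qed

lemma ptype_transpose_comp_3cycle:
  assumes dist: "distinct [a, b, d, e, f]" and sub: "set [a, b, d, e, f] \<subseteq> {1..n}"
  shows "ptype n (transpose a b \<circ> cycle_of_list [d, e, f]) = replicate_mset (n - 5) 1 + {#2, 3#}"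
proof -
  let ?x = "transpose a b \<circ> cycle_of_list [d, e, f]"
  have x: "?x \<in> Sym n"
    using sub by (intro Sym_comp transpose_in_Sym cycle_of_list_in_Sym) auto
  have fixed: "?x i = i" if "i \<in> {1..n} - {a, b, d, e, f}" for i
    using that id_outside_supp[of i "[d, e, f]"] by simp
  have "?x a = b" "?x b = a" "?x d = e" "?x e = f" "?x f = d"
    using dist by auto
  then have orbits: "orbit ?x ` {a, b, d, e, f} = {{a, b}, {d, e, f}}"
    using orbit_2cycle[of ?x a b] orbit_2cycle[of ?x b a]
      orbit_3cycle[of ?x d e f] orbit_3cycle[of ?x e f d] orbit_3cycle[of ?x f d e]
    by (simp add: insert_commute)
  have "{a, b} \<noteq> {d, e, f}"
    using dist by auto
  then have "mset_set {{a, b}, {d, e, f}} = {#{a, b}, {d, e, f}#}"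
    using mset_set_set[of "[{a, b}, {d, e, f}]"] by simp
  moreover have "ptype n ?x = image_mset card (mset_set {{a, b}, {d, e, f}})
      + replicate_mset (n - card {a, b, d, e, f}) 1"
    by (rule ptype_eqI[OF x _ fixed orbits]) (use sub dist in auto)
  ultimately show ?thesis
    using dist by (simp add: add.commute eval_nat_numeral)
qed

theorem lemma7p4:
  fixes n :: nat
  assumes "n \<ge> 6"
  shows "\<exists>\<Delta>. (\<exists>V\<in>verts n. \<Delta> = component n V)
     \<and> (\<forall>\<tau>. is_transposition n \<tau> \<longrightarrow> cls n \<tau> \<in> \<Delta>)
     \<and> (\<exists>V\<in>\<Delta>. has_type n V (replicate_mset (n - 2) 1 + {#2#}))
     \<and> (\<exists>V\<in>\<Delta>. has_type n V (replicate_mset (n - 5) 1 + {#2, 3#}))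
     \<and> (\<exists>V\<in>\<Delta>. has_type n V (replicate_mset (n - 3) 1 + {#3#}))"
proof -
  let ?t = "transpose (1::nat) 2" and ?c = "cycle_of_list [3::nat, 4, 5]"
  let ?x = "?t \<circ> ?c" and ?\<Delta> = "component n (cls n ?t)"
  have pts: "distinct [1::nat, 2, 3, 4, 5]" "set [1::nat, 2, 3, 4, 5] \<subseteq> {1..n}"
    using assms by auto
  have "?t \<in> Sym n" "?c \<in> Sym n"
    using pts by (intro transpose_in_Sym cycle_of_list_in_Sym; auto)+
  then have Sym: "?t \<in> Sym n" "?x \<in> Sym n" "?c \<in> Sym n"
    by (simp_all only: Sym_comp)
  have "cls n ?t \<in> verts n"
    using cls_in_verts[OF Sym(1), of 1] by simp
  moreover have "cls n \<tau> \<in> ?\<Delta>" if "is_transposition n \<tau>" for \<tau>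
    using that transpositions_connected[of 1 2 _ _ n] assms
    unfolding is_transposition_def component_def by auto
  moreover have "cls n ?x \<in> ?\<Delta>" "cls n ?c \<in> ?\<Delta>"
    using adj_transpose_comp_3cycle[OF pts] sympD[OF symp_adj] unfolding component_def
    by (auto intro: rtranclp.rtrancl_into_rtrancl)
  moreover have "cls n ?t \<in> ?\<Delta>"
    unfolding component_def by simp
  ultimately show ?thesis
    using Sym pts ptype_transpose[of 1 2 n] ptype_transpose_comp_3cycle[OF pts]
      ptype_3cycle[of 3 4 5 n]
    unfolding has_type_def by (intro exI[of _ ?\<Delta>] conjI allI impI) auto
qed

end
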